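(* Let $L$ be a PG-lattice and $M$ a faithful multiplication PG-lattice $L$-module. Then for every family $\{a_\alpha\mid\alpha\in\Delta\}\subseteq L$, $$\bigwedge_{\alpha\in\Delta}(a_\alpha I_M)=\Big(\bigwedge_{\alpha\in\Delta}a_\alpha\Big)I_M.$$
   Context: $L$ is a multiplicative lattice (complete lattice with commutative, associative multiplication distributing over arbitrary joins, identity $1$, least $0$), compactly generated, $1$ compact, finite products of compact elements compact. An $L$-module is a complete lattice $M$ (least $O_M$, greatest $I_M$) with product $aB\in M$ satisfying $(\bigvee a_\alpha)A=\bigvee(a_\alpha A)$, $a(\bigvee A_\alpha)=\bigvee(aA_\alpha)$, $(ab)A=a(bA)$, $1A=A$, $0A=O_M$. $(A:B)=\bigvee\{x\in L:xB\leqslant A\}$ for $A,B\in M$; $(a:b)=\bigvee\{x\in L:xb\leqslant a\}$ for $a,b\in L$. $e\in L$ is principal if $a\wedge be=((a:e)\wedge b)e$ and $(ae\vee b):e=(b:e)\vee a$ for all $a,b\in L$; $L$ is a PG-lattice if every element is a join of principal elements. $N\in M$ is principal if $(b\wedge(B:N))N=bN\wedge B$ and $b\vee(B:N)=((bN\vee B):N)$ for all $b\in L,B\in M$; $M$ is a PG-lattice module if every element is a join of principal elements. $M$ is faithful if $(O_M:I_M)=0$; a multiplication module if every $N\in M$ equals $aI_M$ for some $a\in L$. *)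

theory Defs
  imports Main
begin

text \<open>Multiplicative lattices: the carrier is a complete lattice of type 'a,
  multiplication is the function mul; the greatest element top plays the role of 1
  (the multiplicative identity) and bot plays the role of 0.\<close>

definition compact_el :: "'a::complete_lattice \<Rightarrow> bool" where
  "compact_el x \<longleftrightarrow> (\<forall>S. x \<le> Sup S \<longrightarrow> (\<exists>F. finite F \<and> F \<subseteq> S \<and> x \<le> Sup F))"

definition mult_lattice :: "('a::complete_lattice \<Rightarrow> 'a \<Rightarrow> 'a) \<Rightarrow> bool" where
  "mult_lattice mul \<longleftrightarrow>
     (\<forall>a b. mul a b = mul b a) \<and>
     (\<forall>a b c. mul (mul a b) c = mul a (mul b c)) \<and>
     (\<forall>a S. mul a (Sup S) = Sup (mul a ` S)) \<and>
     (\<forall>a. mul top a = a) \<and>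
     (\<forall>x::'a. x = Sup {c. compact_el c \<and> c \<le> x}) \<and>
     compact_el (top::'a) \<and>
     (\<forall>a b. compact_el a \<longrightarrow> compact_el b \<longrightarrow> compact_el (mul a b))"

definition lattice_module ::
  "('a::complete_lattice \<Rightarrow> 'a \<Rightarrow> 'a) \<Rightarrow> ('a \<Rightarrow> 'm::complete_lattice \<Rightarrow> 'm) \<Rightarrow> bool" where
  "lattice_module mul act \<longleftrightarrow>
     mult_lattice mul \<and>
     (\<forall>S A. act (Sup S) A = Sup ((\<lambda>a. act a A) ` S)) \<and>
     (\<forall>a T. act a (Sup T) = Sup (act a ` T)) \<and>
     (\<forall>a b A. act (mul a b) A = act a (act b A)) \<and>
     (\<forall>A. act top A = A) \<and>
     (\<forall>A. act bot A = bot)"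

definition lres :: "('a::complete_lattice \<Rightarrow> 'a \<Rightarrow> 'a) \<Rightarrow> 'a \<Rightarrow> 'a \<Rightarrow> 'a" where
  "lres mul a b = Sup {x. mul x b \<le> a}"

definition mres :: "('a \<Rightarrow> 'm::complete_lattice \<Rightarrow> 'm) \<Rightarrow> 'm \<Rightarrow> 'm \<Rightarrow> 'a::complete_lattice" where
  "mres act A B = Sup {x. act x B \<le> A}"

definition principal_el :: "('a::complete_lattice \<Rightarrow> 'a \<Rightarrow> 'a) \<Rightarrow> 'a \<Rightarrow> bool" where
  "principal_el mul e \<longleftrightarrow>
     (\<forall>a b. inf a (mul b e) = mul (inf (lres mul a e) b) e) \<and>
     (\<forall>a b. lres mul (sup (mul a e) b) e = sup (lres mul b e) a)"

definition PG_lattice :: "('a::complete_lattice \<Rightarrow> 'a \<Rightarrow> 'a) \<Rightarrow> bool" where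
  "PG_lattice mul \<longleftrightarrow> mult_lattice mul \<and>
     (\<forall>x. \<exists>S. (\<forall>e\<in>S. principal_el mul e) \<and> x = Sup S)"

definition principal_mod_el :: "('a::complete_lattice \<Rightarrow> 'm::complete_lattice \<Rightarrow> 'm) \<Rightarrow> 'm \<Rightarrow> bool" where
  "principal_mod_el act N \<longleftrightarrow>
     (\<forall>b B. act (inf b (mres act B N)) N = inf (act b N) B) \<and>
     (\<forall>b B. sup b (mres act B N) = mres act (sup (act b N) B) N)"

definition PG_module ::
  "('a::complete_lattice \<Rightarrow> 'a \<Rightarrow> 'a) \<Rightarrow> ('a \<Rightarrow> 'm::complete_lattice \<Rightarrow> 'm) \<Rightarrow> bool" where
  "PG_module mul act \<longleftrightarrow> lattice_module mul act \<and>
     (\<forall>N. \<exists>S. (\<forall>P\<in>S. principal_mod_el act P) \<and> N = Sup S)"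

definition faithful_module :: "('a::complete_lattice \<Rightarrow> 'm::complete_lattice \<Rightarrow> 'm) \<Rightarrow> bool" where
  "faithful_module act \<longleftrightarrow> mres act (bot::'m) (top::'m) = (bot::'a)"

definition multiplication_module :: "('a::complete_lattice \<Rightarrow> 'm::complete_lattice \<Rightarrow> 'm) \<Rightarrow> bool" where
  "multiplication_module act \<longleftrightarrow> (\<forall>N::'m. \<exists>a::'a. N = act a top)"

end

theory Submission
  imports Defs
begin

text \<open>Let Y be the meet of the a_\<alpha> I and Q a principal element of M, with c = (Q:I), so
  that cI = Q. Then cY lies in B = Q \<and> \<And>(a_\<alpha> Q). Principality gives B = rQ with r = (B:Q)
  and r \<le> (a_\<alpha> Q : Q) = a_\<alpha> \<or> (0:Q); faithfulness gives c(0:Q) = 0, hence rc \<le> a_\<alpha> for all \<alpha>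
  and B = rcI \<le> (\<And>a_\<alpha>)I. Writing Y = yI and I as a join of principal elements Q, Y is the
  join of the yQ = cY, so Y \<le> (\<And>a_\<alpha>)I.\<close>

locale L_module =
  fixes mul :: "'a::complete_lattice \<Rightarrow> 'a \<Rightarrow> 'a"
    and act :: "'a \<Rightarrow> 'm::complete_lattice \<Rightarrow> 'm"
  assumes lattice_module: "lattice_module mul act"
begin

lemma mul_commute: "mul a b = mul b a"
  and mul_Sup: "mul a (Sup S) = Sup (mul a ` S)"
  and top_mul: "mul top a = a"
  and act_Sup_left: "act (Sup S) A = Sup ((\<lambda>a. act a A) ` S)"
  and act_Sup_right: "act a (Sup T) = Sup (act a ` T)"
  and act_mul: "act (mul a b) A = act a (act b A)"
  and top_act: "act top A = A"
  using lattice_module unfolding lattice_module_def mult_lattice_def by auto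

lemma act_mono_left: "x \<le> y \<Longrightarrow> act x A \<le> act y A"
  using act_Sup_left[of "{x, y}" A] by (simp add: le_iff_sup sup_absorb2)

lemma act_mono_right: "X \<le> Y \<Longrightarrow> act a X \<le> act a Y"
  using act_Sup_right[of a "{X, Y}"] by (simp add: le_iff_sup sup_absorb2)

lemma mul_sup_distrib: "mul c (sup x y) = sup (mul c x) (mul c y)"
  using mul_Sup[of c "{x, y}"] by simp

lemma mul_mono_right: "x \<le> y \<Longrightarrow> mul c x \<le> mul c y"
  by (metis le_iff_sup mul_sup_distrib)

lemma mul_le_right: "mul c x \<le> x"
  using mul_mono_right[of c top x] by (simp add: mul_commute top_mul)

lemma act_act_commute: "act x (act y A) = act y (act x A)"
  by (metis act_mul mul_commute)

lemma le_mres_iff: "x \<le> mres act B N \<longleftrightarrow> act x N \<le> B"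
proof
  assume "x \<le> mres act B N"
  then have "act x N \<le> act (mres act B N) N" by (rule act_mono_left)
  also have "\<dots> \<le> B" unfolding mres_def act_Sup_left by (simp add: Sup_le_iff)
  finally show "act x N \<le> B" .
qed (simp add: mres_def Sup_upper)

lemma act_mres_le: "act (mres act B N) N \<le> B"
  using le_mres_iff by blast

lemma mres_mono: "B \<le> B' \<Longrightarrow> mres act B N \<le> mres act B' N"
  by (meson act_mres_le le_mres_iff order_trans)

lemma act_mres_top:
  assumes "multiplication_module act"
  shows "act (mres act N top) top = N"
proof (rule antisym)
  obtain e where "N = act e top"
    using assms unfolding multiplication_module_def by blast
  then have "e \<le> mres act N top" by (simp add: le_mres_iff)
  then show "N \<le> act (mres act N top) top"
    using \<open>N = act e top\<close> act_mono_left by metis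
qed (rule act_mres_le)

lemma act_eq_act_mres_top:
  assumes "multiplication_module act"
  shows "act y N = act (mres act N top) (act y top)"
  by (metis act_act_commute act_mres_top[OF assms])

lemma mul_mres_top_annihilator:
  assumes "faithful_module act"
  shows "mul (mres act N top) (mres act bot N) = bot"
proof -
  have "act (mul (mres act N top) (mres act bot N)) top
        = act (mres act bot N) (act (mres act N top) top)"
    by (simp add: act_mul act_act_commute)
  also have "\<dots> \<le> act (mres act bot N) N"
    by (intro act_mono_right act_mres_le)
  also have "\<dots> \<le> bot" by (rule act_mres_le)
  finally have "mul (mres act N top) (mres act bot N) \<le> mres act bot top"
    by (simp add: le_mres_iff)
  then show ?thesis
    using assms unfolding faithful_module_def by (simp add: bot_unique)
qed

lemma principal_act_mres:
  "principal_mod_el act N \<Longrightarrow> act (mres act B N) N = inf N B"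
  unfolding principal_mod_el_def by (metis inf_top_left top_act)

lemma principal_mres_act:
  "principal_mod_el act N \<Longrightarrow> mres act (act b N) N = sup b (mres act bot N)"
  unfolding principal_mod_el_def by (metis sup_bot_right)

lemma principal_inf_INF_act_le:
  assumes "principal_mod_el act Q" "faithful_module act" "multiplication_module act"
  shows "inf Q (INF \<alpha>\<in>\<Delta>. act (a \<alpha>) Q) \<le> act (Inf (a ` \<Delta>)) top"
    (is "?B \<le> _")
proof -
  define c where "c = mres act Q top"
  define r where "r = mres act ?B Q"
  have c_annihilator: "mul c (mres act bot Q) = bot"
    unfolding c_def by (rule mul_mres_top_annihilator[OF assms(2)])
  have "mul r c \<le> a \<alpha>" if "\<alpha> \<in> \<Delta>" for \<alpha>
  proof -
    have "r \<le> mres act (act (a \<alpha>) Q) Q"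
      unfolding r_def using that by (intro mres_mono) (meson INF_lower inf.coboundedI2)
    also have "\<dots> = sup (a \<alpha>) (mres act bot Q)"
      by (rule principal_mres_act[OF assms(1)])
    finally have "mul c r \<le> sup (mul c (a \<alpha>)) (mul c (mres act bot Q))"
      by (metis mul_mono_right mul_sup_distrib)
    then show ?thesis
      using mul_le_right[of c "a \<alpha>"] by (simp add: c_annihilator mul_commute)
  qed
  then have "act (mul r c) top \<le> act (Inf (a ` \<Delta>)) top"
    by (intro act_mono_left) (auto intro: INF_greatest)
  moreover have "act (mul r c) top = ?B"
    unfolding act_mul c_def act_mres_top[OF assms(3)] r_def
    using principal_act_mres[OF assms(1)] by (simp add: inf_absorb2)
  ultimately show ?thesis by simp
qed

lemma act_mres_top_INF_le:
  assumes "multiplication_module act"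
  shows "act (mres act Q top) (INF \<alpha>\<in>\<Delta>. act (a \<alpha>) top)
         \<le> inf Q (INF \<alpha>\<in>\<Delta>. act (a \<alpha>) Q)"
proof (rule le_infI)
  show "act (mres act Q top) (INF \<alpha>\<in>\<Delta>. act (a \<alpha>) top) \<le> Q"
    using act_mono_right[of _ top] act_mres_top[OF assms] by (metis top_greatest)
  have "act (mres act Q top) (INF \<alpha>\<in>\<Delta>. act (a \<alpha>) top) \<le> act (a \<alpha>) Q" if "\<alpha> \<in> \<Delta>" for \<alpha>
    unfolding act_eq_act_mres_top[OF assms, of "a \<alpha>" Q]
    using that by (intro act_mono_right INF_lower)
  then show "act (mres act Q top) (INF \<alpha>\<in>\<Delta>. act (a \<alpha>) top) \<le> (INF \<alpha>\<in>\<Delta>. act (a \<alpha>) Q)"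
    by (rule INF_greatest)
qed

end

theorem lemma3p3:
  fixes mul :: "'a::complete_lattice \<Rightarrow> 'a \<Rightarrow> 'a"
    and act :: "'a \<Rightarrow> 'm::complete_lattice \<Rightarrow> 'm"
    and a :: "'i \<Rightarrow> 'a" and \<Delta> :: "'i set"
  assumes "PG_lattice mul"
    and "lattice_module mul act"
    and "faithful_module act"
    and "multiplication_module act"
    and "PG_module mul act"
  shows "Inf ((\<lambda>\<alpha>. act (a \<alpha>) top) ` \<Delta>) = act (Inf (a ` \<Delta>)) top"
proof -
  interpret L_module mul act by (rule L_module.intro) fact
  define Y where "Y = (INF \<alpha>\<in>\<Delta>. act (a \<alpha>) top)"
  obtain S where S: "\<forall>Q\<in>S. principal_mod_el act Q" "top = Sup S"
    using assms(5) unfolding PG_module_def by blast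
  obtain y where y: "Y = act y top"
    using assms(4) unfolding multiplication_module_def by blast
  have "act y Q \<le> act (Inf (a ` \<Delta>)) top" if "Q \<in> S" for Q
    using act_mres_top_INF_le[OF assms(4), of Q a \<Delta>]
      principal_inf_INF_act_le[of Q a \<Delta>] S(1) that assms(3,4)
    by (metis Y_def act_eq_act_mres_top y order_trans)
  then have "Y \<le> act (Inf (a ` \<Delta>)) top"
    unfolding y S(2) act_Sup_right by (auto intro: Sup_least)
  moreover have "act (Inf (a ` \<Delta>)) top \<le> Y"
    unfolding Y_def by (auto intro!: INF_greatest act_mono_left INF_lower)
  ultimately show ?thesis unfolding Y_def by (rule antisym)
qed

end
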